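(* Let $b,c,d\in\mathbb{R}$ and $Q(\phi)=\phi^4-c\phi^2+2b\phi+2d$. Consider real solutions $\phi$ of the system $\phi'''-6\phi^2\phi'+c\phi'=0$, $\phi''-2\phi^3+c\phi=b$, $(\phi')^2=Q(\phi)$. There exist bounded periodic (nonconstant) solutions of this system if and only if the four roots of $Q$ are real and distinct, which is equivalent to $(b,c)\in\Omega$, where $\Omega=\{(b,c): b\in(-b_c,b_c),\ c>0\}$ and $b_c=\sqrt{2c^3}/\sqrt{27}$. Ordering the four roots of $Q$ as $u_4<u_3<u_2<u_1$, the solution is given by $$\phi(x)=u_4+\frac{(u_2-u_4)(u_3-u_4)}{(u_2-u_4)-(u_2-u_3)\mathrm{sn}^2(\nu x)},$$ where $\nu=\frac12\sqrt{(u_1-u_3)(u_2-u_4)}$ and $\mathrm{sn}$ has modulus $k=\sqrt{\frac{(u_1-u_4)(u_2-u_3)}{(u_1-u_3)(u_2-u_4)}}$. The fundamental period of $\phi$ is $2\nu^{-1}K(k)$, and its minimal and maximal values on $[-\nu^{-1}K,\nu^{-1}K]$ are attained at $\phi(0)=u_3$ and $\phi(\pm\nu^{-1}K)=u_2$, respectively.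
   Context: $K(k)$ denotes the complete elliptic integral of the first kind and $\mathrm{sn}$ the Jacobi elliptic sine function with modulus $k$. *)

theory Defs
  imports "HOL-Analysis.Analysis"
begin

definition ellip_F :: "real \<Rightarrow> real \<Rightarrow> real" where
  "ellip_F phi k =
     (if 0 \<le> phi then integral {0..phi} (\<lambda>t. 1 / sqrt (1 - k\<^sup>2 * (sin t)\<^sup>2))
      else - integral {phi..0} (\<lambda>t. 1 / sqrt (1 - k\<^sup>2 * (sin t)\<^sup>2)))"

definition ellip_K :: "real \<Rightarrow> real" where
  "ellip_K k = ellip_F (pi / 2) k"

text \<open>Jacobi amplitude: inverse of F(.,k) (meaningful for 0 <= k < 1), and sn = sin o am.\<close>
definition jacobi_am :: "real \<Rightarrow> real \<Rightarrow> real" where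
  "jacobi_am u k = (THE phi. ellip_F phi k = u)"

definition jacobi_sn :: "real \<Rightarrow> real \<Rightarrow> real" where
  "jacobi_sn u k = sin (jacobi_am u k)"

definition Qpoly :: "real \<Rightarrow> real \<Rightarrow> real \<Rightarrow> real \<Rightarrow> real" where
  "Qpoly b c d p = p ^ 4 - c * p\<^sup>2 + 2 * b * p + 2 * d"

definition is_solution :: "real \<Rightarrow> real \<Rightarrow> real \<Rightarrow> (real \<Rightarrow> real) \<Rightarrow> bool" where
  "is_solution b c d \<phi> \<longleftrightarrow>
     (\<exists>\<phi>1 \<phi>2 \<phi>3. \<forall>x.
        (\<phi> has_real_derivative \<phi>1 x) (at x) \<and>
        (\<phi>1 has_real_derivative \<phi>2 x) (at x) \<and>
        (\<phi>2 has_real_derivative \<phi>3 x) (at x) \<and>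
        \<phi>3 x - 6 * (\<phi> x)\<^sup>2 * \<phi>1 x + c * \<phi>1 x = 0 \<and>
        \<phi>2 x - 2 * (\<phi> x) ^ 3 + c * \<phi> x = b \<and>
        (\<phi>1 x)\<^sup>2 = Qpoly b c d (\<phi> x))"

definition periodic_fun :: "(real \<Rightarrow> real) \<Rightarrow> bool" where
  "periodic_fun f \<longleftrightarrow> (\<exists>T>0. \<forall>x. f (x + T) = f x)"

definition fundamental_period :: "(real \<Rightarrow> real) \<Rightarrow> real \<Rightarrow> bool" where
  "fundamental_period f T \<longleftrightarrow> T > 0 \<and> (\<forall>x. f (x + T) = f x) \<and>
     (\<forall>S. 0 < S \<and> S < T \<longrightarrow> \<not> (\<forall>x. f (x + S) = f x))"

definition nonconstant :: "(real \<Rightarrow> real) \<Rightarrow> bool" where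
  "nonconstant f \<longleftrightarrow> \<not> (\<exists>a. \<forall>x. f x = a)"

definition b_crit :: "real \<Rightarrow> real" where
  "b_crit c = sqrt (2 * c ^ 3) / sqrt 27"

definition Omega :: "(real \<times> real) set" where
  "Omega = {(b, c). c > 0 \<and> - b_crit c < b \<and> b < b_crit c}"

definition bpn_solution :: "real \<Rightarrow> real \<Rightarrow> real \<Rightarrow> (real \<Rightarrow> real) \<Rightarrow> bool" where
  "bpn_solution b c d \<phi> \<longleftrightarrow>
     is_solution b c d \<phi> \<and> bounded (range \<phi>) \<and> periodic_fun \<phi> \<and> nonconstant \<phi>"

end

theory Submission
  imports Defs "HOL-Real_Asymp.Real_Asymp"
begin

text \<open>A solution of the system is the same as a solution of \<open>\<phi>'' = Q'(\<phi>)/2\<close> with energy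
  \<open>\<phi>'\<^sup>2 = Q(\<phi>)\<close>, and such solutions are determined by \<open>(\<phi>, \<phi>')\<close> at one point.
  A bounded periodic nonconstant solution attains a minimum \<open>m\<close> and a maximum \<open>M > m\<close>; both are
  roots of \<open>Q\<close>, \<open>Q \<ge> 0\<close> on \<open>[m, M]\<close>, and \<open>Q'\<close> cannot vanish at \<open>m\<close> or \<open>M\<close> (the solution would
  be an equilibrium), so \<open>Q\<close> turns negative beyond \<open>m\<close> and \<open>M\<close> and has two more real roots.
  Conversely, for roots \<open>u4 < u3 < u2 < u1\<close> the Moebius image of \<open>sn\<^sup>2(\<nu>x)\<close> given in the statement
  solves the equation, oscillating between \<open>u3\<close> and \<open>u2\<close> with period \<open>2K/\<nu>\<close>; any other bounded
  periodic solution has minimum \<open>u3\<close> with zero velocity there, hence is a translate of it.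
  Finally, varying \<open>d\<close> shifts \<open>Q\<close> vertically, so \<open>Q\<close> has four real roots for some \<open>d\<close> iff
  \<open>Q'/2 = 2\<phi>\<^sup>3 - c\<phi> + b\<close> has three, i.e. iff \<open>c > 0\<close> and \<open>|b| < b\<^sub>c\<close>.\<close>

section \<open>Elliptic integrals and the Jacobi amplitude\<close>

definition ellip_integrand :: "real \<Rightarrow> real \<Rightarrow> real" where
  "ellip_integrand k t = 1 / sqrt (1 - k\<^sup>2 * (sin t)\<^sup>2)"

lemma ellip_F_conv_integral:
  "ellip_F phi k =
     (if 0 \<le> phi then integral {0..phi} (ellip_integrand k) else - integral {phi..0} (ellip_integrand k))"
  unfolding ellip_F_def ellip_integrand_def by simp

lemma ellip_F_0 [simp]: "ellip_F 0 k = 0"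
  by (simp add: ellip_F_conv_integral)

lemma ellip_integrand_minus: "ellip_integrand k (- t) = ellip_integrand k t"
  by (simp add: ellip_integrand_def)

lemma ellip_integrand_add_pi: "ellip_integrand k (t + pi) = ellip_integrand k t"
  by (simp add: ellip_integrand_def)

lemma ellip_integrand_reflect: "ellip_integrand k (pi / 2 + t) = ellip_integrand k (pi / 2 - t)"
  by (simp add: ellip_integrand_def sin_cos_eq cos_add cos_diff)

definition sn_poly :: "real \<Rightarrow> real \<Rightarrow> real" where
  "sn_poly k s = s * (1 - s) * (1 - k\<^sup>2 * s)"

definition sn_poly_deriv :: "real \<Rightarrow> real \<Rightarrow> real" where
  "sn_poly_deriv k s = (1 - 2 * s) * (1 - k\<^sup>2 * s) - k\<^sup>2 * s * (1 - s)"

context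
  fixes k :: real
  assumes modulus: "k\<^sup>2 < 1"
begin

lemma ellip_radicand_pos: "0 < 1 - k\<^sup>2 * (sin t)\<^sup>2"
proof -
  have "(sin t)\<^sup>2 \<le> 1"
    by (simp add: abs_square_le_1)
  then have "k\<^sup>2 * (sin t)\<^sup>2 \<le> k\<^sup>2"
    by (simp add: mult_left_le)
  with modulus show ?thesis by linarith
qed

lemma ellip_integrand_ge_1: "1 \<le> ellip_integrand k t"
proof -
  have "0 < sqrt (1 - k\<^sup>2 * (sin t)\<^sup>2)" and "sqrt (1 - k\<^sup>2 * (sin t)\<^sup>2) \<le> 1"
    using ellip_radicand_pos[of t] by auto
  then show ?thesis by (simp add: ellip_integrand_def)
qed

lemma continuous_on_ellip_integrand: "continuous_on S (ellip_integrand k)"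
proof -
  have "1 - k\<^sup>2 * (sin t)\<^sup>2 \<noteq> 0" for t
    using ellip_radicand_pos[of t] by linarith
  then show ?thesis
    unfolding ellip_integrand_def by (intro continuous_intros) auto
qed

lemma ellip_F_eq_integral_diff:
  assumes "a \<le> 0" and "a \<le> phi"
  shows "ellip_F phi k = integral {a..phi} (ellip_integrand k) - integral {a..0} (ellip_integrand k)"
proof (cases "0 \<le> phi")
  case True
  have "integral {a..0} (ellip_integrand k) + integral {0..phi} (ellip_integrand k)
      = integral {a..phi} (ellip_integrand k)"
    using assms True
    by (intro Henstock_Kurzweil_Integration.integral_combine integrable_continuous_real
        continuous_on_ellip_integrand) auto
  then show ?thesis using True by (simp add: ellip_F_conv_integral)
next
  case False
  have "integral {a..phi} (ellip_integrand k) + integral {phi..0} (ellip_integrand k)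
      = integral {a..0} (ellip_integrand k)"
    using assms False
    by (intro Henstock_Kurzweil_Integration.integral_combine integrable_continuous_real
        continuous_on_ellip_integrand) auto
  then show ?thesis using False by (simp add: ellip_F_conv_integral)
qed

lemma ellip_F_has_real_derivative:
  "((\<lambda>p. ellip_F p k) has_real_derivative ellip_integrand k x) (at x)"
proof -
  define a where "a = - \<bar>x\<bar> - 1"
  define b where "b = \<bar>x\<bar> + 1"
  have "((\<lambda>p. integral {a..p} (ellip_integrand k)) has_real_derivative ellip_integrand k x)
      (at x within {a..b})"
    by (rule integral_has_real_derivative)
      (auto simp: a_def b_def intro!: continuous_on_ellip_integrand)
  then have "((\<lambda>p. integral {a..p} (ellip_integrand k)) has_real_derivative ellip_integrand k x)
      (at x within {a<..<b})"
    by (rule has_field_derivative_subset) auto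
  then have "((\<lambda>p. integral {a..p} (ellip_integrand k)) has_real_derivative ellip_integrand k x) (at x)"
    by (subst (asm) at_within_open) (auto simp: a_def b_def)
  then have "((\<lambda>p. integral {a..p} (ellip_integrand k) - integral {a..0} (ellip_integrand k))
      has_real_derivative ellip_integrand k x) (at x)"
    by (auto intro!: derivative_eq_intros)
  then show ?thesis
    by (rule has_field_derivative_transform_within_open[where S="{a<..<b}"])
      (auto simp: a_def b_def intro!: ellip_F_eq_integral_diff[symmetric])
qed

lemma isCont_ellip_F: "isCont (\<lambda>p. ellip_F p k) x"
  using ellip_F_has_real_derivative DERIV_isCont by blast

lemma ellip_F_strict_mono:
  assumes "x < y"
  shows "ellip_F x k < ellip_F y k"
proof (rule DERIV_pos_imp_increasing[OF assms])
  fix z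
  have "0 < ellip_integrand k z"
    using ellip_integrand_ge_1[of z] by linarith
  then show "\<exists>l. ((\<lambda>p. ellip_F p k) has_real_derivative l) (at z) \<and> 0 < l"
    using ellip_F_has_real_derivative by blast
qed

lemma ellip_F_ge_self:
  assumes "0 \<le> x"
  shows "x \<le> ellip_F x k"
proof -
  have "ellip_F 0 k - 0 \<le> ellip_F x k - x"
    by (rule DERIV_nonneg_imp_nondecreasing[OF assms, of "\<lambda>p. ellip_F p k - p"])
      (auto intro!: exI derivative_eq_intros ellip_F_has_real_derivative
        simp: ellip_integrand_ge_1)
  then show ?thesis by simp
qed

lemma ellip_F_minus: "ellip_F (- x) k = - ellip_F x k"
proof -
  have "ellip_F (- x) k + ellip_F x k = ellip_F (- 0) k + ellip_F 0 k"
    by (rule DERIV_isconst_all[of "\<lambda>p. ellip_F (- p) k + ellip_F p k"])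
      (auto intro!: derivative_eq_intros ellip_F_has_real_derivative
        DERIV_chain2[OF ellip_F_has_real_derivative] simp: ellip_integrand_minus)
  then show ?thesis by simp
qed

text \<open>The increment of \<open>F\<close> over \<open>[x, x + \<pi>]\<close> is independent of \<open>x\<close> since the integrand is
  \<open>\<pi>\<close>-periodic, and \<open>F(\<pi>) = 2 F(\<pi>/2)\<close> by its symmetry about \<open>\<pi>/2\<close>.\<close>
lemma ellip_F_add_pi: "ellip_F (x + pi) k = ellip_F x k + 2 * ellip_K k"
proof -
  have "ellip_F (x + pi) k - ellip_F x k = ellip_F (0 + pi) k - ellip_F 0 k"
    by (rule DERIV_isconst_all[of "\<lambda>p. ellip_F (p + pi) k - ellip_F p k"])
      (auto intro!: derivative_eq_intros ellip_F_has_real_derivative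
        DERIV_chain2[OF ellip_F_has_real_derivative] simp: ellip_integrand_add_pi)
  moreover have "ellip_F (pi / 2 + pi / 2) k + ellip_F (pi / 2 - pi / 2) k
      = ellip_F (pi / 2 + 0) k + ellip_F (pi / 2 - 0) k"
    by (rule DERIV_isconst_all[of "\<lambda>t. ellip_F (pi / 2 + t) k + ellip_F (pi / 2 - t) k"])
      (auto intro!: derivative_eq_intros ellip_F_has_real_derivative
        DERIV_chain2[OF ellip_F_has_real_derivative] simp: ellip_integrand_reflect)
  ultimately show ?thesis by (simp add: ellip_K_def)
qed

lemma ellip_F_bij: "\<exists>!p. ellip_F p k = u"
proof -
  have surj_nonneg: "\<exists>p. ellip_F p k = v" if "0 \<le> v" for v
  proof -
    have "\<exists>p\<ge>0. p \<le> v \<and> ellip_F p k = v"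
      using that ellip_F_ge_self[OF that] isCont_ellip_F by (intro IVT) auto
    then show ?thesis by blast
  qed
  have "\<exists>p. ellip_F p k = u"
  proof (cases "0 \<le> u")
    case False
    then obtain p where "ellip_F p k = - u" using surj_nonneg[of "- u"] by auto
    then show ?thesis by (metis ellip_F_minus minus_minus)
  qed (rule surj_nonneg)
  moreover have "p = q" if "ellip_F p k = ellip_F q k" for p q
    using ellip_F_strict_mono[of p q] ellip_F_strict_mono[of q p] that
    by (cases p q rule: linorder_cases) auto
  ultimately show ?thesis by blast
qed

lemma ellip_F_jacobi_am [simp]: "ellip_F (jacobi_am u k) k = u"
  unfolding jacobi_am_def by (rule theI' [OF ellip_F_bij])

lemma jacobi_am_ellip_F [simp]: "jacobi_am (ellip_F p k) k = p"
  using ellip_F_bij[of "ellip_F p k"] ellip_F_jacobi_am by blast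

lemma jacobi_am_strict_mono:
  assumes "u < v"
  shows "jacobi_am u k < jacobi_am v k"
proof -
  have "jacobi_am u k \<noteq> jacobi_am v k"
    using assms ellip_F_jacobi_am by (metis less_irrefl)
  moreover have "\<not> jacobi_am v k < jacobi_am u k"
    using ellip_F_strict_mono[of "jacobi_am v k" "jacobi_am u k"] assms by auto
  ultimately show ?thesis by simp
qed

lemma isCont_jacobi_am: "isCont (\<lambda>u. jacobi_am u k) u"
  using isCont_inverse_function[where d=1 and f="\<lambda>p. ellip_F p k" and x="jacobi_am u k"]
  by (simp add: isCont_ellip_F)

lemma jacobi_am_has_real_derivative:
  "((\<lambda>u. jacobi_am u k) has_real_derivative sqrt (1 - k\<^sup>2 * (sin (jacobi_am u k))\<^sup>2)) (at u)"
proof -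
  have "((\<lambda>u. jacobi_am u k) has_real_derivative inverse (ellip_integrand k (jacobi_am u k))) (at u)"
    using ellip_integrand_ge_1[of "jacobi_am u k"]
    by (intro DERIV_inverse_function[where f="\<lambda>p. ellip_F p k" and a="u - 1" and b="u + 1"])
      (auto simp: ellip_F_has_real_derivative isCont_jacobi_am)
  then show ?thesis by (simp add: ellip_integrand_def)
qed

lemma jacobi_am_0 [simp]: "jacobi_am 0 k = 0"
  using jacobi_am_ellip_F[of 0] by simp

lemma jacobi_am_ellip_K: "jacobi_am (ellip_K k) k = pi / 2"
  using jacobi_am_ellip_F[of "pi / 2"] by (simp add: ellip_K_def)

lemma jacobi_am_minus_ellip_K: "jacobi_am (- ellip_K k) k = - pi / 2"
  using jacobi_am_ellip_F[of "- pi / 2"] ellip_F_minus[of "pi / 2"] by (simp add: ellip_K_def)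

lemma jacobi_am_add_2K: "jacobi_am (u + 2 * ellip_K k) k = jacobi_am u k + pi"
  using jacobi_am_ellip_F[of "jacobi_am u k + pi"] by (simp add: ellip_F_add_pi)

lemma ellip_K_pos: "0 < ellip_K k"
  using ellip_F_ge_self[of "pi / 2"] pi_gt3 unfolding ellip_K_def by simp

lemma jacobi_sn_sq_ode:
  fixes \<nu> :: real
  obtains S1 where
    "\<And>x. ((\<lambda>x. (jacobi_sn (\<nu> * x) k)\<^sup>2) has_real_derivative S1 x) (at x)"
    "\<And>x. (S1 x)\<^sup>2 = 4 * \<nu>\<^sup>2 * sn_poly k ((jacobi_sn (\<nu> * x) k)\<^sup>2)"
    "\<And>x. (S1 has_real_derivative 2 * \<nu>\<^sup>2 * sn_poly_deriv k ((jacobi_sn (\<nu> * x) k)\<^sup>2)) (at x)"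
proof
  define th where "th x = jacobi_am (\<nu> * x) k" for x
  define q where "q x = sqrt (1 - k\<^sup>2 * (sin (th x))\<^sup>2)" for x
  define S1 where "S1 x = 2 * \<nu> * sin (th x) * cos (th x) * q x" for x
  have q_pos: "0 < q x" and q_sq: "(q x)\<^sup>2 = 1 - k\<^sup>2 * (sin (th x))\<^sup>2" for x
    using ellip_radicand_pos[of "th x"] by (simp_all add: q_def)
  have dth: "(th has_real_derivative q x * \<nu>) (at x)" for x
    unfolding th_def[abs_def] q_def th_def
    by (rule DERIV_chain2[OF jacobi_am_has_real_derivative]) (auto intro!: derivative_eq_intros)
  have dq: "(q has_real_derivative - (k\<^sup>2 * sin (th x) * cos (th x) * \<nu>)) (at x)" for x
  proof -
    have "(q has_real_derivative
        - (k\<^sup>2 * (2 * sin (th x) * (cos (th x) * (q x * \<nu>)))) / (2 * q x)) (at x)"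
      unfolding q_def[abs_def] using q_pos[of x]
      by (auto intro!: derivative_eq_intros dth simp: q_def power2_eq_square)
    then show ?thesis using q_pos[of x] by (simp add: field_simps)
  qed
  show "((\<lambda>x. (jacobi_sn (\<nu> * x) k)\<^sup>2) has_real_derivative S1 x) (at x)" for x
    unfolding jacobi_sn_def th_def[symmetric] S1_def
    by (auto intro!: derivative_eq_intros dth simp: algebra_simps power2_eq_square)
  show "(S1 x)\<^sup>2 = 4 * \<nu>\<^sup>2 * sn_poly k ((jacobi_sn (\<nu> * x) k)\<^sup>2)" for x
    unfolding jacobi_sn_def th_def[symmetric] S1_def sn_poly_def
    by (simp add: power_mult_distrib q_sq cos_squared_eq)
  have "(S1 has_real_derivative 2 * \<nu>\<^sup>2 *
      (((cos (th x))\<^sup>2 - (sin (th x))\<^sup>2) * (q x)\<^sup>2 - k\<^sup>2 * (sin (th x))\<^sup>2 * (cos (th x))\<^sup>2)) (at x)" for x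
    unfolding S1_def[abs_def]
    by (auto intro!: derivative_eq_intros dth dq simp: algebra_simps power2_eq_square)
  then show "(S1 has_real_derivative 2 * \<nu>\<^sup>2 * sn_poly_deriv k ((jacobi_sn (\<nu> * x) k)\<^sup>2)) (at x)"
    for x
    unfolding jacobi_sn_def th_def[symmetric] sn_poly_deriv_def q_sq cos_squared_eq
    by (simp add: algebra_simps)
qed

end

lemma deriv_nonpos_if_min_from_left:
  fixes f :: "real \<Rightarrow> real"
  assumes "(f has_real_derivative l) (at x)" and "a < x" and "\<And>y. a < y \<Longrightarrow> y < x \<Longrightarrow> f x \<le> f y"
  shows "l \<le> 0"
proof (rule ccontr)
  assume "\<not> l \<le> 0"
  then have "0 < l" by simp
  then obtain \<delta> where "\<delta> > 0" and \<delta>: "\<And>h. 0 < h \<Longrightarrow> h < \<delta> \<Longrightarrow> f (x - h) < f x"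
    using DERIV_pos_inc_left[OF assms(1)] by blast
  define h where "h = min (\<delta> / 2) ((x - a) / 2)"
  have "0 < h" "h < \<delta>"
    using \<open>\<delta> > 0\<close> assms(2) by (auto simp: h_def)
  moreover have "h \<le> (x - a) / 2"
    unfolding h_def by (rule min.cobounded2)
  moreover have "a < x - h"
    using calculation(3) assms(2) by (simp add: field_simps)
  ultimately show False using \<delta>[of h] assms(3)[of "x - h"] by simp
qed

lemma deriv_nonneg_if_min_from_right:
  fixes f :: "real \<Rightarrow> real"
  assumes "(f has_real_derivative l) (at x)" and "x < a" and "\<And>y. x < y \<Longrightarrow> y < a \<Longrightarrow> f x \<le> f y"
  shows "0 \<le> l"
proof -
  have "((\<lambda>y. f (- y)) has_real_derivative - l) (at (- x))"
    using assms(1) DERIV_mirror[of f l "- x"] by simp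
  then have "- l \<le> 0"
    by (rule deriv_nonpos_if_min_from_left[where a="- a"]) (use assms(2,3) in auto)
  then show ?thesis by simp
qed

lemma Rolle_real_deriv:
  fixes f f' :: "real \<Rightarrow> real"
  assumes "a < b" and "f a = f b" and deriv: "\<And>x. (f has_real_derivative f' x) (at x)"
  shows "\<exists>z. a < z \<and> z < b \<and> f' z = 0"
proof -
  have "continuous_on {a..b} f"
    using deriv by (meson DERIV_isCont continuous_at_imp_continuous_on)
  then obtain z where "a < z" "z < b" "(f has_real_derivative 0) (at z)"
    using Rolle[OF assms(1,2)] deriv real_differentiable_def by metis
  with DERIV_unique[OF deriv this(3)] show ?thesis by blast
qed

lemma continuous_root_above:
  fixes f :: "real \<Rightarrow> real"
  assumes "continuous_on UNIV f" and "filterlim f at_top at_top" and "f y < 0"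
  shows "\<exists>r>y. f r = 0"
proof -
  obtain N where N: "\<And>p. N \<le> p \<Longrightarrow> 0 \<le> f p"
    using assms(2) unfolding filterlim_at_top eventually_at_top_linorder by blast
  define R where "R = max N (y + 1)"
  have "y \<le> R" and "0 \<le> f R" using N by (auto simp: R_def)
  then obtain r where "y \<le> r" "r \<le> R" "f r = 0"
    using IVT'[of f y 0 R] assms(1,3) continuous_on_subset by fastforce
  with assms(3) show ?thesis by (metis less_eq_real_def less_irrefl)
qed

lemma continuous_root_below:
  fixes f :: "real \<Rightarrow> real"
  assumes "continuous_on UNIV f" and "filterlim f at_top at_bot" and "f y < 0"
  shows "\<exists>r<y. f r = 0"
proof -
  obtain N where N: "\<And>p. p \<le> N \<Longrightarrow> 0 \<le> f p"
    using assms(2) unfolding filterlim_at_top eventually_at_bot_linorder by blast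
  define R where "R = min N (y - 1)"
  have "R \<le> y" and "0 \<le> f R" using N by (auto simp: R_def)
  then obtain r where "R \<le> r" "r \<le> y" "f r = 0"
    using IVT2'[of f y 0 R] assms(1,3) continuous_on_subset by fastforce
  with assms(3) show ?thesis by (metis less_eq_real_def less_irrefl)
qed

lemma continuous_root_between:
  fixes f :: "real \<Rightarrow> real"
  assumes "continuous_on {a..b} f" and "a \<le> b" and "f a * f b < 0"
  obtains x where "a < x" "x < b" "f x = 0"
proof -
  obtain x where x: "a \<le> x" "x \<le> b" "f x = 0"
  proof (cases "f a < 0")
    case True
    then have "0 \<le> f b" using assms(3) by (simp add: mult_less_0_iff)
    with True assms(1,2) show ?thesis
      using IVT'[of f a 0 b] that by auto
  next
    case False
    then have "f b \<le> 0" using assms(3) by (simp add: mult_less_0_iff)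
    with False assms(1,2) show ?thesis
      using IVT2'[of f b 0 a] that by auto
  qed
  moreover have "x \<noteq> a" "x \<noteq> b" using assms(3) x(3) by auto
  ultimately show ?thesis by (intro that[of x]) auto
qed

lemma periodic_add_of_int_mult:
  fixes f :: "real \<Rightarrow> 'a"
  assumes per: "\<And>x. f (x + T) = f x"
  shows "f (x + of_int n * T) = f x"
proof -
  have nat: "f (y + real m * T) = f y" for y m
  proof (induction m)
    case (Suc m)
    have "f (y + real (Suc m) * T) = f ((y + real m * T) + T)"
      by (simp add: algebra_simps)
    with Suc per show ?case by simp
  qed simp
  show ?thesis
  proof (cases "0 \<le> n")
    case True
    then show ?thesis using nat[of x "nat n"] by simp
  next
    case False
    then show ?thesis using nat[of "x + of_int n * T" "nat (- n)"] by simp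
  qed
qed

lemma continuous_periodic_attains_extrema:
  fixes f :: "real \<Rightarrow> real"
  assumes cont: "continuous_on UNIV f" and "T > 0" and per: "\<And>x. f (x + T) = f x"
  obtains xm xM where "\<And>x. f xm \<le> f x" and "\<And>x. f x \<le> f xM"
proof -
  have co: "continuous_on {0..T} f"
    using cont by (rule continuous_on_subset) simp
  obtain xm where xm: "\<forall>y\<in>{0..T}. f xm \<le> f y"
    using continuous_attains_inf[OF compact_Icc _ co] \<open>T > 0\<close> by auto
  obtain xM where xM: "\<forall>y\<in>{0..T}. f y \<le> f xM"
    using continuous_attains_sup[OF compact_Icc _ co] \<open>T > 0\<close> by auto
  have "\<exists>r\<in>{0..T}. f x = f r" for x
  proof
    define n where "n = \<lfloor>x / T\<rfloor>"
    have "of_int n \<le> x / T" and "x / T < of_int n + 1"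
      unfolding n_def by linarith+
    then have "of_int n * T \<le> x" and "x < (of_int n + 1) * T"
      using \<open>T > 0\<close> by (simp_all add: field_simps)
    then show "x - of_int n * T \<in> {0..T}" by (simp add: algebra_simps)
    show "f x = f (x - of_int n * T)"
      using periodic_add_of_int_mult[where f=f, OF per, of "x - of_int n * T" n] by simp
  qed
  then show ?thesis using that xm xM by metis
qed

lemma gronwall_zero:
  fixes e e' :: "real \<Rightarrow> real"
  assumes deriv: "\<And>t. (e has_real_derivative e' t) (at t)"
    and bound: "\<And>t. \<bar>e' t\<bar> \<le> C * e t"
    and nonneg: "\<And>t. 0 \<le> e t"
    and zero: "e x0 = 0"
  shows "e x = 0"
proof (cases "x0 \<le> x")
  case True
  have "- (e x0 * exp (- C * x0)) \<le> - (e x * exp (- C * x))"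
  proof (rule DERIV_nonneg_imp_nondecreasing[OF True, of "\<lambda>t. - (e t * exp (- C * t))"])
    fix t
    have "e' t \<le> C * e t"
      using bound[of t] by (simp add: abs_le_iff)
    then have "e' t * exp (- C * t) \<le> C * e t * exp (- C * t)"
      by (intro mult_right_mono) auto
    then show "\<exists>l. ((\<lambda>t. - (e t * exp (- C * t))) has_real_derivative l) (at t) \<and> 0 \<le> l"
      by (auto intro!: exI derivative_eq_intros deriv simp: algebra_simps)
  qed
  then have "e x * exp (- C * x) \<le> 0" using zero by simp
  with nonneg[of x] show ?thesis by (simp add: mult_le_0_iff)
next
  case False
  have "e x * exp (C * x) \<le> e x0 * exp (C * x0)"
  proof (rule DERIV_nonneg_imp_nondecreasing[of x x0 "\<lambda>t. e t * exp (C * t)"])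
    show "x \<le> x0" using False by simp
    fix t
    have "- C * e t \<le> e' t"
      using bound[of t] by (simp add: abs_le_iff)
    then have "- C * e t * exp (C * t) \<le> e' t * exp (C * t)"
      by (intro mult_right_mono) auto
    then show "\<exists>l. ((\<lambda>t. e t * exp (C * t)) has_real_derivative l) (at t) \<and> 0 \<le> l"
      by (auto intro!: exI derivative_eq_intros deriv simp: algebra_simps)
  qed
  then have "e x * exp (C * x) \<le> 0" using zero by simp
  with nonneg[of x] show ?thesis by (simp add: mult_le_0_iff)
qed

text \<open>Uniqueness for \<open>y'' = f(y)\<close> along two solutions between which \<open>f\<close> is Lipschitz, via the
  energy \<open>(y - z)\<^sup>2 + (y' - z')\<^sup>2\<close>, whose derivative is bounded by \<open>(1 + |L|)\<close> times itself.\<close>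
lemma second_order_autonomous_unique:
  fixes y z y1 z1 f :: "real \<Rightarrow> real"
  assumes "\<And>x. (y has_real_derivative y1 x) (at x)" "\<And>x. (y1 has_real_derivative f (y x)) (at x)"
    and "\<And>x. (z has_real_derivative z1 x) (at x)" "\<And>x. (z1 has_real_derivative f (z x)) (at x)"
    and lipschitz: "\<And>x. \<bar>f (y x) - f (z x)\<bar> \<le> L * \<bar>y x - z x\<bar>"
    and "y x0 = z x0" "y1 x0 = z1 x0"
  shows "y x = z x"
proof -
  define e where "e t = (y t - z t)\<^sup>2 + (y1 t - z1 t)\<^sup>2" for t
  define e' where
    "e' t = 2 * ((y t - z t) * (y1 t - z1 t)) + 2 * ((y1 t - z1 t) * (f (y t) - f (z t)))" for t
  have deriv: "(e has_real_derivative e' t) (at t)" for t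
    unfolding e_def[abs_def] e'_def
    by (auto intro!: derivative_eq_intros assms(1-4) simp: algebra_simps)
  have bound: "\<bar>e' t\<bar> \<le> (1 + \<bar>L\<bar>) * e t" for t
  proof -
    define a where "a = \<bar>y t - z t\<bar>"
    define v where "v = \<bar>y1 t - z1 t\<bar>"
    have am_gm: "2 * a * v \<le> a\<^sup>2 + v\<^sup>2"
      using sum_squares_bound[of a v] by simp
    have "L * a \<le> \<bar>L\<bar> * a"
      by (rule mult_right_mono) (auto simp: a_def)
    then have "\<bar>f (y t) - f (z t)\<bar> \<le> \<bar>L\<bar> * a"
      using lipschitz[of t] unfolding a_def by linarith
    then have "v * \<bar>f (y t) - f (z t)\<bar> \<le> v * (\<bar>L\<bar> * a)"
      by (intro mult_left_mono) (auto simp: v_def)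
    moreover have "\<bar>e' t\<bar> \<le> 2 * (a * v) + 2 * (v * \<bar>f (y t) - f (z t)\<bar>)"
      unfolding e'_def a_def v_def by (rule order_trans[OF abs_triangle_ineq]) (simp add: abs_mult)
    ultimately have "\<bar>e' t\<bar> \<le> 2 * a * v + \<bar>L\<bar> * (2 * a * v)"
      by (simp add: algebra_simps)
    also have "\<dots> \<le> (a\<^sup>2 + v\<^sup>2) + \<bar>L\<bar> * (a\<^sup>2 + v\<^sup>2)"
      using am_gm mult_left_mono[OF am_gm, of "\<bar>L\<bar>"] by simp
    also have "\<dots> = (1 + \<bar>L\<bar>) * (a\<^sup>2 + v\<^sup>2)"
      by (simp add: algebra_simps)
    finally show ?thesis by (simp add: e_def a_def v_def)
  qed
  have "e x = 0"
    by (rule gronwall_zero[OF deriv bound])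
      (use assms(6,7) in \<open>simp_all add: e_def\<close>)
  then show ?thesis by (simp add: e_def)
qed

section \<open>The quartic and the reduced equation\<close>

lemma card_4_sorted:
  fixes S :: "'a :: linorder set"
  assumes "card S = 4"
  obtains a b c d where "a < b" "b < c" "c < d" "S = {a, b, c, d}"
proof -
  define xs where "xs = sorted_list_of_set S"
  have "finite S" using assms by (metis card.infinite zero_neq_numeral)
  then have "set xs = S" "sorted_wrt (<) xs" "length xs = 4"
    using assms by (auto simp: xs_def strict_sorted_list_of_set)
  moreover obtain a b c d where "xs = [a, b, c, d]"
    using calculation(3) by (auto simp: numeral_eq_Suc length_Suc_conv)
  ultimately show ?thesis using that by auto
qed

lemma quadratic_coeffs_zero:
  fixes a0 a1 a2 x1 x2 x3 :: real
  assumes "distinct [x1, x2, x3]"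
    and "\<And>x. x \<in> {x1, x2, x3} \<Longrightarrow> a2 * x\<^sup>2 + a1 * x + a0 = 0"
  shows "a2 = 0 \<and> a1 = 0 \<and> a0 = 0"
proof -
  have "(x1 - x2) * (a2 * (x1 + x2) + a1) = 0" and "(x1 - x3) * (a2 * (x1 + x3) + a1) = 0"
    using assms(2)[of x1] assms(2)[of x2] assms(2)[of x3]
    by (simp_all add: algebra_simps power2_eq_square)
  then have h12: "a2 * (x1 + x2) + a1 = 0" and h13: "a2 * (x1 + x3) + a1 = 0"
    using assms(1) by auto
  have "(x2 - x3) * a2 = (a2 * (x1 + x2) + a1) - (a2 * (x1 + x3) + a1)"
    by (simp add: algebra_simps)
  then have "a2 = 0" using h12 h13 assms(1) by simp
  then show ?thesis using h12 assms(2)[of x1] by simp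
qed

lemma cubic_coeffs_zero:
  fixes a0 a1 a2 a3 x1 x2 x3 x4 :: real
  assumes "distinct [x1, x2, x3, x4]"
    and "\<And>x. x \<in> {x1, x2, x3, x4} \<Longrightarrow> a3 * x ^ 3 + a2 * x\<^sup>2 + a1 * x + a0 = 0"
  shows "a3 = 0 \<and> a2 = 0 \<and> a1 = 0 \<and> a0 = 0"
proof -
  have "a3 * x\<^sup>2 + (a2 + a3 * x1) * x + (a1 + a2 * x1 + a3 * x1\<^sup>2) = 0" if "x \<in> {x2, x3, x4}" for x
  proof -
    have "(x - x1) * (a3 * x\<^sup>2 + (a2 + a3 * x1) * x + (a1 + a2 * x1 + a3 * x1\<^sup>2)) = 0"
      using assms(2)[of x] assms(2)[of x1] that
      by (simp add: algebra_simps power2_eq_square power3_eq_cube)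
    moreover have "x \<noteq> x1" using assms(1) that by auto
    ultimately show ?thesis by simp
  qed
  then have "a3 = 0 \<and> a2 + a3 * x1 = 0 \<and> a1 + a2 * x1 + a3 * x1\<^sup>2 = 0"
    using assms(1) by (intro quadratic_coeffs_zero[of x2 x3 x4]) auto
  then show ?thesis using assms(2)[of x1] by auto
qed

text \<open>\<open>Q\<close> minus the monic quartic with the four roots is a cubic vanishing at four points.\<close>
lemma Qpoly_eq_prod_roots:
  fixes u1 u2 u3 u4 :: real
  assumes "distinct [u1, u2, u3, u4]" and "{u1, u2, u3, u4} \<subseteq> {p. Qpoly b c d p = 0}"
  shows "Qpoly b c d x = (x - u1) * (x - u2) * (x - u3) * (x - u4)"
proof -
  define a3 where "a3 = u1 + u2 + u3 + u4"
  define a2 where "a2 = - c - (u1*u2 + u1*u3 + u1*u4 + u2*u3 + u2*u4 + u3*u4)"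
  define a1 where "a1 = 2 * b + (u1*u2*u3 + u1*u2*u4 + u1*u3*u4 + u2*u3*u4)"
  define a0 where "a0 = 2 * d - u1*u2*u3*u4"
  have diff: "Qpoly b c d y - (y - u1) * (y - u2) * (y - u3) * (y - u4)
      = a3 * y ^ 3 + a2 * y\<^sup>2 + a1 * y + a0" for y
    unfolding Qpoly_def a3_def a2_def a1_def a0_def
    by (simp add: algebra_simps power2_eq_square power3_eq_cube power4_eq_xxxx)
  have "a3 = 0 \<and> a2 = 0 \<and> a1 = 0 \<and> a0 = 0"
    using assms by (intro cubic_coeffs_zero[of u1 u2 u3 u4]) (auto simp flip: diff)
  then show ?thesis using diff[of x] by simp
qed

lemma Qpoly_roots_card_4:
  fixes u1 u2 u3 u4 :: real
  assumes "distinct [u1, u2, u3, u4]" and "{u1, u2, u3, u4} \<subseteq> {p. Qpoly b c d p = 0}"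
  shows "card {p. Qpoly b c d p = 0} = 4"
proof -
  have "{p. Qpoly b c d p = 0} = {u1, u2, u3, u4}"
    using assms by (auto simp: Qpoly_eq_prod_roots[OF assms])
  then show ?thesis using assms(1) by simp
qed

definition ode_rhs :: "real \<Rightarrow> real \<Rightarrow> real \<Rightarrow> real" where
  "ode_rhs b c p = 2 * p ^ 3 - c * p + b"

lemma Qpoly_has_real_derivative: "(Qpoly b c d has_real_derivative 2 * ode_rhs b c p) (at p)"
  unfolding Qpoly_def[abs_def] ode_rhs_def
  by (auto intro!: derivative_eq_intros simp: algebra_simps power2_eq_square power3_eq_cube)

lemma continuous_on_Qpoly: "continuous_on S (Qpoly b c d)"
  unfolding Qpoly_def[abs_def] by (intro continuous_intros)

lemma ode_rhs_eq_sum_triple_prods: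
  fixes u1 u2 u3 u4 :: real
  assumes "distinct [u1, u2, u3, u4]" and "{u1, u2, u3, u4} \<subseteq> {p. Qpoly b c d p = 0}"
  shows "ode_rhs b c p = ((p - u2) * (p - u3) * (p - u4) + (p - u1) * (p - u3) * (p - u4)
      + (p - u1) * (p - u2) * (p - u4) + (p - u1) * (p - u2) * (p - u3)) / 2"
proof -
  have "(Qpoly b c d has_real_derivative (p - u2) * (p - u3) * (p - u4) + (p - u1) * (p - u3) * (p - u4)
      + (p - u1) * (p - u2) * (p - u4) + (p - u1) * (p - u2) * (p - u3)) (at p)"
    unfolding Qpoly_eq_prod_roots[OF assms, abs_def]
    by (auto intro!: derivative_eq_intros simp: algebra_simps)
  from DERIV_unique[OF Qpoly_has_real_derivative this] show ?thesis by simp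
qed

lemma ode_rhs_eq_prod_roots:
  fixes w1 w2 w3 :: real
  assumes "distinct [w1, w2, w3]" and "\<And>w. w \<in> {w1, w2, w3} \<Longrightarrow> ode_rhs b c w = 0"
  shows "ode_rhs b c x = 2 * (x - w1) * (x - w2) * (x - w3)"
proof -
  define a2 where "a2 = 2 * (w1 + w2 + w3)"
  define a1 where "a1 = - c - 2 * (w1*w2 + w1*w3 + w2*w3)"
  define a0 where "a0 = b + 2 * w1*w2*w3"
  have diff: "ode_rhs b c y - 2 * (y - w1) * (y - w2) * (y - w3) = a2 * y\<^sup>2 + a1 * y + a0" for y
    unfolding ode_rhs_def a2_def a1_def a0_def
    by (simp add: algebra_simps power2_eq_square power3_eq_cube)
  have "a2 = 0 \<and> a1 = 0 \<and> a0 = 0"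
    using assms by (intro quadratic_coeffs_zero[of w1 w2 w3]) (auto simp flip: diff)
  then show ?thesis using diff[of x] by simp
qed

lemma ode_rhs_has_real_derivative: "(ode_rhs b c has_real_derivative 6 * p\<^sup>2 - c) (at p)"
  unfolding ode_rhs_def[abs_def]
  by (auto intro!: derivative_eq_intros simp: power2_eq_square)

lemma ode_rhs_lipschitz:
  assumes "\<bar>y\<bar> \<le> B" and "\<bar>z\<bar> \<le> B"
  shows "\<bar>ode_rhs b c y - ode_rhs b c z\<bar> \<le> (6 * B\<^sup>2 + \<bar>c\<bar>) * \<bar>y - z\<bar>"
proof -
  have "\<bar>y * z\<bar> \<le> B\<^sup>2"
    using assms by (auto simp: abs_mult power2_eq_square intro: mult_mono)
  then have "y * z \<le> B\<^sup>2" and "- (y * z) \<le> B\<^sup>2"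
    by (simp_all add: abs_le_iff)
  moreover have "y\<^sup>2 \<le> B\<^sup>2" and "z\<^sup>2 \<le> B\<^sup>2"
    using assms by (metis abs_le_square_iff abs_of_nonneg abs_ge_zero order_trans)+
  ultimately have "2 * (y\<^sup>2 + y * z + z\<^sup>2) \<le> 6 * B\<^sup>2"
      and "- (2 * (y\<^sup>2 + y * z + z\<^sup>2)) \<le> 6 * B\<^sup>2"
    using zero_le_power2[of y] zero_le_power2[of z] by (smt (verit))+
  then have "\<bar>2 * (y\<^sup>2 + y * z + z\<^sup>2) - c\<bar> \<le> 6 * B\<^sup>2 + \<bar>c\<bar>"
    using abs_triangle_ineq4[of "2 * (y\<^sup>2 + y * z + z\<^sup>2)" c] by linarith
  moreover have "ode_rhs b c y - ode_rhs b c z = (2 * (y\<^sup>2 + y * z + z\<^sup>2) - c) * (y - z)"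
    unfolding ode_rhs_def by (simp add: algebra_simps power2_eq_square power3_eq_cube)
  ultimately show ?thesis
    by (simp add: abs_mult mult_right_mono)
qed

lemma Qpoly_root_above: "Qpoly b c d y < 0 \<Longrightarrow> \<exists>r>y. Qpoly b c d r = 0"
  by (rule continuous_root_above[OF continuous_on_Qpoly])
    (unfold Qpoly_def[abs_def], real_asymp)

lemma Qpoly_root_below: "Qpoly b c d y < 0 \<Longrightarrow> \<exists>r<y. Qpoly b c d r = 0"
  by (rule continuous_root_below[OF continuous_on_Qpoly])
    (unfold Qpoly_def[abs_def], real_asymp)

text \<open>The third equation of the system is the derivative of the second, so a solution is the
  same as a solution of the second-order equation \<open>\<phi>'' = Q'(\<phi>)/2\<close> with energy \<open>\<phi>'\<^sup>2 = Q(\<phi>)\<close>.\<close>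
lemma is_solution_iff:
  "is_solution b c d \<phi> \<longleftrightarrow>
     (\<exists>\<phi>1. \<forall>x. (\<phi> has_real_derivative \<phi>1 x) (at x)
        \<and> (\<phi>1 has_real_derivative ode_rhs b c (\<phi> x)) (at x)
        \<and> (\<phi>1 x)\<^sup>2 = Qpoly b c d (\<phi> x))" (is "_ \<longleftrightarrow> ?reduced")
proof
  assume "is_solution b c d \<phi>"
  then obtain \<phi>1 \<phi>2 where sol: "\<And>x. (\<phi> has_real_derivative \<phi>1 x) (at x)
      \<and> (\<phi>1 has_real_derivative \<phi>2 x) (at x) \<and> \<phi>2 x - 2 * (\<phi> x) ^ 3 + c * \<phi> x = b
      \<and> (\<phi>1 x)\<^sup>2 = Qpoly b c d (\<phi> x)"
    unfolding is_solution_def by blast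
  have "\<phi>2 x = ode_rhs b c (\<phi> x)" for x
    using sol[of x] by (simp add: ode_rhs_def)
  with sol show ?reduced by metis
next
  assume ?reduced
  then obtain \<phi>1 where sol: "\<And>x. (\<phi> has_real_derivative \<phi>1 x) (at x)"
      "\<And>x. (\<phi>1 has_real_derivative ode_rhs b c (\<phi> x)) (at x)"
      "\<And>x. (\<phi>1 x)\<^sup>2 = Qpoly b c d (\<phi> x)"
    by blast
  have "((\<lambda>x. ode_rhs b c (\<phi> x)) has_real_derivative (6 * (\<phi> x)\<^sup>2 - c) * \<phi>1 x) (at x)" for x
    by (rule DERIV_chain2[OF ode_rhs_has_real_derivative sol(1)])
  with sol show "is_solution b c d \<phi>"
    unfolding is_solution_def
    by (intro exI[of _ \<phi>1] exI[of _ "\<lambda>x. ode_rhs b c (\<phi> x)"]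
        exI[of _ "\<lambda>x. (6 * (\<phi> x)\<^sup>2 - c) * \<phi>1 x"])
      (auto simp: ode_rhs_def algebra_simps)
qed

section \<open>The explicit periodic solution\<close>

locale ordered_roots =
  fixes u1 u2 u3 u4 :: real
  assumes u43: "u4 < u3" and u32: "u3 < u2" and u21: "u2 < u1"
begin

definition wave_freq :: real where
  "wave_freq = sqrt ((u1 - u3) * (u2 - u4)) / 2"

definition wave_modulus :: real where
  "wave_modulus = sqrt (((u1 - u4) * (u2 - u3)) / ((u1 - u3) * (u2 - u4)))"

definition moebius :: "real \<Rightarrow> real" where
  "moebius s = u4 + (u2 - u4) * (u3 - u4) / ((u2 - u4) - (u2 - u3) * s)"

definition wave :: "real \<Rightarrow> real" where
  "wave x = u4 + ((u2 - u4) * (u3 - u4)) /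
     ((u2 - u4) - (u2 - u3) * (jacobi_sn (wave_freq * x) wave_modulus)\<^sup>2)"

lemma wave_eq_moebius: "wave x = moebius ((jacobi_sn (wave_freq * x) wave_modulus)\<^sup>2)"
  by (simp add: wave_def moebius_def)

lemma wave_freq_pos: "0 < wave_freq"
  using u43 u32 u21 by (simp add: wave_freq_def)

lemma wave_freq_sq: "4 * wave_freq\<^sup>2 = (u1 - u3) * (u2 - u4)"
  using u43 u32 u21 by (simp add: wave_freq_def power_divide)

lemma wave_freq_sq_modulus_sq: "4 * wave_freq\<^sup>2 * wave_modulus\<^sup>2 = (u1 - u4) * (u2 - u3)"
  using u43 u32 u21 by (simp add: wave_freq_sq wave_modulus_def)

lemma wave_modulus_sq_less_1: "wave_modulus\<^sup>2 < 1"
proof -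
  have "(u1 - u3) * (u2 - u4) - (u1 - u4) * (u2 - u3) = (u1 - u2) * (u3 - u4)"
    by (simp add: algebra_simps)
  then have "(u1 - u4) * (u2 - u3) < (u1 - u3) * (u2 - u4)"
    using u43 u21 by (smt (verit) mult_pos_pos)
  then show ?thesis
    using u43 u32 u21 by (simp add: wave_modulus_def)
qed

lemma moebius_denom_pos:
  assumes "s \<le> 1"
  shows "0 < (u2 - u4) - (u2 - u3) * s"
proof -
  have "(u2 - u3) * s \<le> u2 - u3"
    using assms u32 by (simp add: mult_left_le)
  then show ?thesis using u43 by linarith
qed

lemma moebius_minus_u3:
  "s \<le> 1 \<Longrightarrow> moebius s - u3 = (u3 - u4) * (u2 - u3) * s / ((u2 - u4) - (u2 - u3) * s)"
  using moebius_denom_pos[of s] by (simp add: moebius_def field_simps)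

lemma u2_minus_moebius:
  "s \<le> 1 \<Longrightarrow> u2 - moebius s = (u2 - u4) * (u2 - u3) * (1 - s) / ((u2 - u4) - (u2 - u3) * s)"
  using moebius_denom_pos[of s] by (simp add: moebius_def field_simps)

lemma moebius_0: "moebius 0 = u3"
  using moebius_minus_u3[of 0] by simp

lemma moebius_1: "moebius 1 = u2"
  using u2_minus_moebius[of 1] by simp

lemma moebius_between:
  assumes "0 \<le> s" "s \<le> 1"
  shows "u3 \<le> moebius s" "moebius s \<le> u2"
proof -
  have "0 \<le> moebius s - u3"
    unfolding moebius_minus_u3[OF assms(2)]
    using assms u43 u32 moebius_denom_pos[OF assms(2)] by (intro divide_nonneg_pos) auto
  moreover have "0 \<le> u2 - moebius s"
    unfolding u2_minus_moebius[OF assms(2)]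
    using assms u43 u32 moebius_denom_pos[OF assms(2)] by (intro divide_nonneg_pos) auto
  ultimately show "u3 \<le> moebius s" "moebius s \<le> u2" by simp_all
qed

lemma moebius_eq_u3_iff: "s \<le> 1 \<Longrightarrow> moebius s = u3 \<longleftrightarrow> s = 0"
  using moebius_minus_u3[of s] moebius_denom_pos[of s] u43 u32 by auto

lemma wave_between: "u3 \<le> wave x" "wave x \<le> u2"
  using moebius_between[of "(jacobi_sn (wave_freq * x) wave_modulus)\<^sup>2"]
  by (simp_all add: wave_eq_moebius jacobi_sn_def abs_square_le_1)

lemma wave_0: "wave 0 = u3"
  using wave_modulus_sq_less_1 by (simp add: wave_eq_moebius jacobi_sn_def moebius_0)

lemma wave_ellip_K:
  "wave (ellip_K wave_modulus / wave_freq) = u2"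
  "wave (- ellip_K wave_modulus / wave_freq) = u2"
  using wave_freq_pos wave_modulus_sq_less_1
  by (simp_all add: wave_eq_moebius jacobi_sn_def jacobi_am_ellip_K jacobi_am_minus_ellip_K moebius_1)

lemma wave_add_period: "wave (x + 2 * ellip_K wave_modulus / wave_freq) = wave x"
proof -
  have "wave_freq * (x + 2 * ellip_K wave_modulus / wave_freq) = wave_freq * x + 2 * ellip_K wave_modulus"
    using wave_freq_pos by (simp add: field_simps)
  then show ?thesis
    by (simp add: wave_eq_moebius jacobi_sn_def jacobi_am_add_2K[OF wave_modulus_sq_less_1])
qed

text \<open>A shorter period \<open>T\<close> would give \<open>wave T = wave 0 = u3\<close>, i.e. \<open>sn(\<nu>T) = 0\<close>, although the
  amplitude of \<open>\<nu>T\<close> lies in \<open>(0, \<pi>)\<close>.\<close>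
lemma wave_fundamental_period: "fundamental_period wave (2 * ellip_K wave_modulus / wave_freq)"
  unfolding fundamental_period_def
proof (intro conjI allI impI wave_add_period)
  note k = wave_modulus_sq_less_1
  show "0 < 2 * ellip_K wave_modulus / wave_freq"
    using ellip_K_pos[OF k] wave_freq_pos by simp
  fix T assume T: "0 < T \<and> T < 2 * ellip_K wave_modulus / wave_freq"
  show "\<not> (\<forall>x. wave (x + T) = wave x)"
  proof
    assume "\<forall>x. wave (x + T) = wave x"
    then have "wave T = u3" using wave_0 by (metis add_0)
    then have "sin (jacobi_am (wave_freq * T) wave_modulus) = 0"
      by (simp add: wave_eq_moebius jacobi_sn_def moebius_eq_u3_iff abs_square_le_1)
    moreover have "0 < jacobi_am (wave_freq * T) wave_modulus"
      using jacobi_am_strict_mono[OF k, of 0 "wave_freq * T"] T wave_freq_pos by (simp add: k)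
    moreover have "jacobi_am (wave_freq * T) wave_modulus < pi"
      using jacobi_am_strict_mono[OF k, of "wave_freq * T" "0 + 2 * ellip_K wave_modulus"] T wave_freq_pos
      by (simp add: jacobi_am_add_2K[OF k] jacobi_am_0[OF k] field_simps del: add_0)
    ultimately show False using sin_gt_zero by fastforce
  qed
qed

lemma wave_bounded_periodic_nonconstant:
  "bounded (range wave)" "periodic_fun wave" "nonconstant wave"
proof -
  show "bounded (range wave)"
    by (rule bounded_subset[OF bounded_closed_interval[of u3 u2]]) (auto intro: wave_between)
  show "periodic_fun wave"
    using wave_fundamental_period unfolding fundamental_period_def periodic_fun_def by blast
  show "nonconstant wave"
    using wave_0 wave_ellip_K u32 unfolding nonconstant_def by force
qed

definition moebius_deriv :: "real \<Rightarrow> real" where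
  "moebius_deriv s = (u2 - u4) * (u3 - u4) * (u2 - u3) / ((u2 - u4) - (u2 - u3) * s)\<^sup>2"

definition moebius_deriv2 :: "real \<Rightarrow> real" where
  "moebius_deriv2 s = 2 * ((u2 - u4) * (u3 - u4)) * (u2 - u3)\<^sup>2 / ((u2 - u4) - (u2 - u3) * s) ^ 3"

lemma moebius_has_real_derivative: "s \<le> 1 \<Longrightarrow> (moebius has_real_derivative moebius_deriv s) (at s)"
  using moebius_denom_pos[of s] unfolding moebius_def[abs_def] moebius_deriv_def
  by (auto intro!: derivative_eq_intros simp: power2_eq_square algebra_simps)

lemma moebius_deriv_has_real_derivative:
  assumes "s \<le> 1"
  shows "(moebius_deriv has_real_derivative moebius_deriv2 s) (at s)"
proof -
  define C where "C = (u2 - u4) * (u3 - u4) * (u2 - u3)"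
  have inv_sq: "((\<lambda>w. C / w\<^sup>2) has_real_derivative - 2 * C / w ^ 3) (at w)" if "w \<noteq> 0" for w
    using that by (auto intro!: derivative_eq_intros simp: power2_eq_square power3_eq_cube mult_ac)
  have denom: "((\<lambda>s. (u2 - u4) - (u2 - u3) * s) has_real_derivative - (u2 - u3)) (at s)"
    by (auto intro!: derivative_eq_intros)
  have "(moebius_deriv has_real_derivative
      - 2 * C / ((u2 - u4) - (u2 - u3) * s) ^ 3 * - (u2 - u3)) (at s)"
    unfolding moebius_deriv_def[abs_def] C_def[symmetric]
    by (rule DERIV_chain2[OF inv_sq denom]) (use moebius_denom_pos[OF assms] in simp)
  moreover have "- 2 * C / ((u2 - u4) - (u2 - u3) * s) ^ 3 * - (u2 - u3) = moebius_deriv2 s"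
    by (simp add: moebius_deriv2_def C_def power2_eq_square algebra_simps)
  ultimately show ?thesis by simp
qed

definition sn_energy :: "real \<Rightarrow> real" where
  "sn_energy s = s * (1 - s) * ((u1 - u3) * (u2 - u4) - (u1 - u4) * (u2 - u3) * s)"

definition sn_energy_deriv :: "real \<Rightarrow> real" where
  "sn_energy_deriv s = (1 - 2 * s) * ((u1 - u3) * (u2 - u4) - (u1 - u4) * (u2 - u3) * s)
     - s * (1 - s) * (u1 - u4) * (u2 - u3)"

lemma sn_energy_eq: "sn_energy s = 4 * wave_freq\<^sup>2 * sn_poly wave_modulus s"
proof -
  have "4 * wave_freq\<^sup>2 * sn_poly wave_modulus s
      = s * (1 - s) * (4 * wave_freq\<^sup>2 - 4 * wave_freq\<^sup>2 * wave_modulus\<^sup>2 * s)"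
    by (simp add: sn_poly_def algebra_simps)
  also have "\<dots> = sn_energy s"
    unfolding wave_freq_sq_modulus_sq unfolding wave_freq_sq sn_energy_def ..
  finally show ?thesis ..
qed

lemma sn_energy_deriv_eq: "sn_energy_deriv s / 2 = 2 * wave_freq\<^sup>2 * sn_poly_deriv wave_modulus s"
proof -
  have "2 * wave_freq\<^sup>2 * sn_poly_deriv wave_modulus s
      = ((1 - 2 * s) * (4 * wave_freq\<^sup>2 - 4 * wave_freq\<^sup>2 * wave_modulus\<^sup>2 * s)
         - s * (1 - s) * (4 * wave_freq\<^sup>2 * wave_modulus\<^sup>2)) / 2"
    by (simp add: sn_poly_deriv_def algebra_simps)
  also have "\<dots> = sn_energy_deriv s / 2"
    unfolding wave_freq_sq_modulus_sq unfolding wave_freq_sq sn_energy_deriv_def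
    by (simp add: algebra_simps)
  finally show ?thesis ..
qed

lemma wave_sn_sq_ode:
  obtains S1 where
    "\<And>x. ((\<lambda>x. (jacobi_sn (wave_freq * x) wave_modulus)\<^sup>2) has_real_derivative S1 x) (at x)"
    "\<And>x. (S1 x)\<^sup>2 = sn_energy ((jacobi_sn (wave_freq * x) wave_modulus)\<^sup>2)"
    "\<And>x. (S1 has_real_derivative sn_energy_deriv ((jacobi_sn (wave_freq * x) wave_modulus)\<^sup>2) / 2) (at x)"
  unfolding sn_energy_eq sn_energy_deriv_eq
  using jacobi_sn_sq_ode[OF wave_modulus_sq_less_1, where \<nu>=wave_freq] by blast

lemma moebius_minus_roots:
  fixes s :: real
  defines "W \<equiv> (u2 - u4) - (u2 - u3) * s"
    and "M \<equiv> (u1 - u3) * (u2 - u4) - (u1 - u4) * (u2 - u3) * s"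
  assumes s: "s \<le> 1"
  shows "moebius s - u1 = - M / W" and "moebius s - u2 = - (u2 - u4) * (u2 - u3) * (1 - s) / W"
    and "moebius s - u3 = (u3 - u4) * (u2 - u3) * s / W" and "moebius s - u4 = (u2 - u4) * (u3 - u4) / W"
  using moebius_denom_pos[OF s] unfolding moebius_def W_def M_def
  by (simp_all add: field_simps)

end

locale quartic_roots = ordered_roots +
  fixes b c d :: real
  assumes roots: "{p. Qpoly b c d p = 0} = {u1, u2, u3, u4}"
begin

lemma distinct_roots: "distinct [u1, u2, u3, u4]"
  using u43 u32 u21 by auto

lemma Qpoly_eq_prod: "Qpoly b c d x = (x - u1) * (x - u2) * (x - u3) * (x - u4)"
  by (rule Qpoly_eq_prod_roots[OF distinct_roots]) (simp add: roots)

lemma Qpoly_neg_between_roots: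
  assumes "u4 < p \<and> p < u3 \<or> u2 < p \<and> p < u1"
  shows "Qpoly b c d p < 0"
proof -
  have "(p - u1) * (p - u2) * ((p - u3) * (p - u4)) < 0"
    using assms u43 u32 u21
    by (auto simp: mult_pos_neg mult_neg_neg mult_neg_pos mult_pos_pos)
  then show ?thesis by (simp add: Qpoly_eq_prod mult.assoc)
qed

text \<open>The substitution \<open>\<phi> = moebius (sn\<^sup>2)\<close> turns \<open>S'\<^sup>2 = sn_energy S\<close> into \<open>\<phi>'\<^sup>2 = Q(\<phi>)\<close>
  and \<open>S'' = sn_energy' S / 2\<close> into \<open>\<phi>'' = Q'(\<phi>)/2\<close>; these two identities are all the algebra
  behind the explicit solution.\<close>
lemma moebius_energy_identity:
  assumes "s \<le> 1"
  shows "(moebius_deriv s)\<^sup>2 * sn_energy s = Qpoly b c d (moebius s)"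
proof -
  define W where "W = (u2 - u4) - (u2 - u3) * s"
  define M where "M = (u1 - u3) * (u2 - u4) - (u1 - u4) * (u2 - u3) * s"
  have "W \<noteq> 0" using moebius_denom_pos[OF assms] by (simp add: W_def)
  then show ?thesis
    unfolding Qpoly_eq_prod moebius_minus_roots[OF assms, folded W_def M_def] moebius_deriv_def sn_energy_def
      W_def[symmetric] M_def[symmetric]
    by (simp add: field_simps) algebra
qed

lemma moebius_force_identity:
  assumes "s \<le> 1"
  shows "moebius_deriv2 s * sn_energy s + moebius_deriv s * sn_energy_deriv s / 2
    = ode_rhs b c (moebius s)"
proof -
  define D where "D = u2 - u4"
  define E where "E = u2 - u3"
  define W where "W = (u2 - u4) - (u2 - u3) * s"
  define M where "M = (u1 - u3) * (u2 - u4) - (u1 - u4) * (u2 - u3) * s"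
  have "W \<noteq> 0" using moebius_denom_pos[OF assms] by (simp add: W_def)
  have "moebius_deriv2 s * sn_energy s + moebius_deriv s * sn_energy_deriv s / 2
    = ((- D * E * (1 - s)) * ((u3 - u4) * E * s) * (D * (u3 - u4))
       + (- M) * ((u3 - u4) * E * s) * (D * (u3 - u4))
       + (- M) * (- D * E * (1 - s)) * (D * (u3 - u4))
       + (- M) * (- D * E * (1 - s)) * ((u3 - u4) * E * s)) / W ^ 3 / 2"
    using \<open>W \<noteq> 0\<close>
    unfolding moebius_deriv_def moebius_deriv2_def sn_energy_def sn_energy_deriv_def
      W_def[symmetric] M_def[symmetric]
    by (simp add: field_simps) (unfold W_def M_def D_def E_def, algebra)
  also have "\<dots> = ((moebius s - u2) * (moebius s - u3) * (moebius s - u4)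
       + (moebius s - u1) * (moebius s - u3) * (moebius s - u4)
       + (moebius s - u1) * (moebius s - u2) * (moebius s - u4)
       + (moebius s - u1) * (moebius s - u2) * (moebius s - u3)) / 2"
    using \<open>W \<noteq> 0\<close>
    unfolding moebius_minus_roots[OF assms, folded W_def M_def] D_def E_def
    by (simp add: field_simps) algebra
  also have "\<dots> = ode_rhs b c (moebius s)"
    using ode_rhs_eq_sum_triple_prods[OF distinct_roots, of b c d "moebius s"] roots by simp
  finally show ?thesis .
qed

lemma wave_is_solution: "is_solution b c d wave"
proof -
  obtain S1 where
    dS: "\<And>x. ((\<lambda>x. (jacobi_sn (wave_freq * x) wave_modulus)\<^sup>2) has_real_derivative S1 x) (at x)" and
    S1_sq: "\<And>x. (S1 x)\<^sup>2 = sn_energy ((jacobi_sn (wave_freq * x) wave_modulus)\<^sup>2)" and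
    dS1: "\<And>x. (S1 has_real_derivative sn_energy_deriv ((jacobi_sn (wave_freq * x) wave_modulus)\<^sup>2) / 2) (at x)"
    using wave_sn_sq_ode by blast
  define S where "S = (\<lambda>x. (jacobi_sn (wave_freq * x) wave_modulus)\<^sup>2)"
  have S_eq: "(jacobi_sn (wave_freq * x) wave_modulus)\<^sup>2 = S x" for x
    by (simp add: S_def)
  have S_le_1: "S x \<le> 1" for x
    by (simp add: S_def jacobi_sn_def abs_square_le_1)
  have wave_S: "wave = (\<lambda>x. moebius (S x))"
    by (simp add: fun_eq_iff wave_eq_moebius S_def)
  define \<phi>1 where "\<phi>1 x = moebius_deriv (S x) * S1 x" for x
  have "(wave has_real_derivative \<phi>1 x) (at x)" for x
    unfolding wave_S \<phi>1_def
    by (rule DERIV_chain2[OF moebius_has_real_derivative[OF S_le_1] dS[unfolded S_eq]])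
  moreover have "(\<phi>1 has_real_derivative ode_rhs b c (wave x)) (at x)" for x
  proof -
    have "(\<phi>1 has_real_derivative moebius_deriv2 (S x) * S1 x * S1 x
        + sn_energy_deriv (S x) / 2 * moebius_deriv (S x)) (at x)"
      unfolding \<phi>1_def[abs_def]
      by (rule DERIV_mult[OF DERIV_chain2[OF moebius_deriv_has_real_derivative[OF S_le_1]
            dS[unfolded S_eq]] dS1[unfolded S_eq]])
    also have "moebius_deriv2 (S x) * S1 x * S1 x + sn_energy_deriv (S x) / 2 * moebius_deriv (S x)
        = moebius_deriv2 (S x) * sn_energy (S x) + moebius_deriv (S x) * sn_energy_deriv (S x) / 2"
      using S1_sq[of x, unfolded S_eq] by (simp add: power2_eq_square mult.assoc)
    also have "\<dots> = ode_rhs b c (wave x)"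
      using moebius_force_identity[OF S_le_1] by (simp add: wave_S)
    finally show ?thesis .
  qed
  moreover have "(\<phi>1 x)\<^sup>2 = Qpoly b c d (wave x)" for x
    using S1_sq[of x, unfolded S_eq] moebius_energy_identity[OF S_le_1[of x]]
    by (simp add: \<phi>1_def wave_S power_mult_distrib)
  ultimately show ?thesis
    unfolding is_solution_iff by (intro exI[of _ \<phi>1]) simp
qed

lemma wave_bpn_solution: "bpn_solution b c d wave"
  unfolding bpn_solution_def using wave_is_solution wave_bounded_periodic_nonconstant by blast

end

section \<open>Bounded periodic solutions\<close>

locale bounded_orbit =
  fixes b c d :: real and \<psi> \<psi>1 :: "real \<Rightarrow> real" and xm xM :: real
  assumes deriv: "\<And>x. (\<psi> has_real_derivative \<psi>1 x) (at x)"
    and deriv1: "\<And>x. (\<psi>1 has_real_derivative ode_rhs b c (\<psi> x)) (at x)"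
    and energy: "\<And>x. (\<psi>1 x)\<^sup>2 = Qpoly b c d (\<psi> x)"
    and min: "\<And>x. \<psi> xm \<le> \<psi> x" and max: "\<And>x. \<psi> x \<le> \<psi> xM"
    and nonconstant: "\<psi> xm < \<psi> xM"

lemma bpn_solution_imp_bounded_orbit:
  assumes "bpn_solution b c d \<psi>"
  obtains \<psi>1 xm xM where "bounded_orbit b c d \<psi> \<psi>1 xm xM"
proof -
  obtain \<psi>1 where sol: "\<And>x. (\<psi> has_real_derivative \<psi>1 x) (at x)"
      "\<And>x. (\<psi>1 has_real_derivative ode_rhs b c (\<psi> x)) (at x)" "\<And>x. (\<psi>1 x)\<^sup>2 = Qpoly b c d (\<psi> x)"
    using assms unfolding bpn_solution_def is_solution_iff by blast
  obtain T where "T > 0" "\<And>x. \<psi> (x + T) = \<psi> x"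
    using assms unfolding bpn_solution_def periodic_fun_def by blast
  moreover have "continuous_on UNIV \<psi>"
    using sol(1) by (meson DERIV_isCont continuous_at_imp_continuous_on)
  ultimately obtain xm xM where "\<And>x. \<psi> xm \<le> \<psi> x" "\<And>x. \<psi> x \<le> \<psi> xM"
    using continuous_periodic_attains_extrema by metis
  moreover have "\<psi> xm < \<psi> xM"
    using assms calculation unfolding bpn_solution_def nonconstant_def
    by (metis antisym not_less)
  ultimately show ?thesis
    using sol by (intro that) (unfold_locales)
qed

context bounded_orbit
begin

lemma abs_bounded: "\<bar>\<psi> x\<bar> \<le> \<bar>\<psi> xm\<bar> + \<bar>\<psi> xM\<bar>"
  using min[of x] max[of x] by linarith

lemma deriv_at_extrema: "\<psi>1 xm = 0" "\<psi>1 xM = 0"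
  using DERIV_local_min[OF deriv zero_less_one] DERIV_local_max[OF deriv zero_less_one] min max
  by blast+

lemma Qpoly_at_extrema: "Qpoly b c d (\<psi> xm) = 0" "Qpoly b c d (\<psi> xM) = 0"
  using energy deriv_at_extrema by (metis power_zero_numeral)+

lemma Qpoly_nonneg_between:
  assumes "\<psi> xm \<le> p" "p \<le> \<psi> xM"
  shows "0 \<le> Qpoly b c d p"
proof -
  have cont: "continuous_on S \<psi>" for S
    using deriv by (meson DERIV_isCont continuous_at_imp_continuous_on)
  have "\<exists>x. \<psi> x = p"
  proof (cases "xm \<le> xM")
    case True
    then show ?thesis using IVT'[of \<psi> xm p xM, OF assms _ cont] by blast
  next
    case False
    then show ?thesis using IVT2'[of \<psi> xm p xM, OF assms _ cont] by fastforce
  qed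
  then show ?thesis using energy by (metis zero_le_power2)
qed

text \<open>If \<open>\<psi>\<close> touched an equilibrium with zero velocity, uniqueness would make it constant.\<close>
lemma ode_rhs_nonzero_at_extrema: "ode_rhs b c (\<psi> xm) \<noteq> 0" "ode_rhs b c (\<psi> xM) \<noteq> 0"
proof -
  define B where "B = \<bar>\<psi> xm\<bar> + \<bar>\<psi> xM\<bar>"
  have const: "\<psi> x = \<psi> x0" if "\<psi>1 x0 = 0" "ode_rhs b c (\<psi> x0) = 0" for x x0
  proof (rule second_order_autonomous_unique[OF deriv deriv1])
    show "((\<lambda>_. \<psi> x0) has_real_derivative (\<lambda>_. 0) x) (at x)" for x by simp
    show "((\<lambda>_. 0) has_real_derivative ode_rhs b c ((\<lambda>_. \<psi> x0) x)) (at x)" for x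
      using that by simp
    show "\<bar>ode_rhs b c (\<psi> x) - ode_rhs b c ((\<lambda>_. \<psi> x0) x)\<bar> \<le> (6 * B\<^sup>2 + \<bar>c\<bar>) * \<bar>\<psi> x - (\<lambda>_. \<psi> x0) x\<bar>"
      for x
      by (rule ode_rhs_lipschitz) (simp_all add: B_def abs_bounded)
  qed (use that in simp_all)
  show "ode_rhs b c (\<psi> xm) \<noteq> 0" "ode_rhs b c (\<psi> xM) \<noteq> 0"
    using const[OF deriv_at_extrema(1), of xM] const[OF deriv_at_extrema(2), of xm] nonconstant
    by auto
qed

lemma ode_rhs_at_extrema: "0 < ode_rhs b c (\<psi> xm)" "ode_rhs b c (\<psi> xM) < 0"
proof -
  have "0 \<le> 2 * ode_rhs b c (\<psi> xm)"
    by (rule deriv_nonneg_if_min_from_right[OF Qpoly_has_real_derivative[of b c d] nonconstant])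
      (use Qpoly_at_extrema Qpoly_nonneg_between in auto)
  with ode_rhs_nonzero_at_extrema(1) show "0 < ode_rhs b c (\<psi> xm)" by simp
  have "2 * ode_rhs b c (\<psi> xM) \<le> 0"
    by (rule deriv_nonpos_if_min_from_left[OF Qpoly_has_real_derivative[of b c d] nonconstant])
      (use Qpoly_at_extrema Qpoly_nonneg_between in auto)
  with ode_rhs_nonzero_at_extrema(2) show "ode_rhs b c (\<psi> xM) < 0" by simp
qed

text \<open>Since \<open>Q\<close> crosses zero transversally at the extreme values, it becomes negative beyond
  them and has two further roots there.\<close>
lemma Qpoly_roots_outside: "\<exists>r. r < \<psi> xm \<and> Qpoly b c d r = 0" "\<exists>r. \<psi> xM < r \<and> Qpoly b c d r = 0"
proof -
  have "0 < 2 * ode_rhs b c (\<psi> xm)" using ode_rhs_at_extrema(1) by simp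
  then obtain \<delta> where \<delta>: "\<delta> > 0" "\<And>h. 0 < h \<Longrightarrow> h < \<delta> \<Longrightarrow> Qpoly b c d (\<psi> xm - h) < Qpoly b c d (\<psi> xm)"
    using DERIV_pos_inc_left[OF Qpoly_has_real_derivative] by blast
  have "Qpoly b c d (\<psi> xm - \<delta> / 2) < 0"
    using \<delta>(2)[of "\<delta> / 2"] \<delta>(1) Qpoly_at_extrema(1) by simp
  then obtain r where "r < \<psi> xm - \<delta> / 2" "Qpoly b c d r = 0"
    using Qpoly_root_below by blast
  with \<delta>(1) show "\<exists>r. r < \<psi> xm \<and> Qpoly b c d r = 0"
    by (intro exI[of _ r]) simp
  have "2 * ode_rhs b c (\<psi> xM) < 0" using ode_rhs_at_extrema(2) by simp
  then obtain \<delta>' where \<delta>': "\<delta>' > 0" "\<And>h. 0 < h \<Longrightarrow> h < \<delta>' \<Longrightarrow> Qpoly b c d (\<psi> xM + h) < Qpoly b c d (\<psi> xM)"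
    using DERIV_neg_dec_right[OF Qpoly_has_real_derivative] by blast
  have "Qpoly b c d (\<psi> xM + \<delta>' / 2) < 0"
    using \<delta>'(2)[of "\<delta>' / 2"] \<delta>'(1) Qpoly_at_extrema(2) by simp
  then obtain r' where "\<psi> xM + \<delta>' / 2 < r'" "Qpoly b c d r' = 0"
    using Qpoly_root_above by blast
  with \<delta>'(1) show "\<exists>r. \<psi> xM < r \<and> Qpoly b c d r = 0"
    by (intro exI[of _ r']) simp
qed

lemma Qpoly_card_roots: "card {p. Qpoly b c d p = 0} = 4"
proof -
  obtain r r' where "r < \<psi> xm" "Qpoly b c d r = 0" "\<psi> xM < r'" "Qpoly b c d r' = 0"
    using Qpoly_roots_outside by blast
  with nonconstant Qpoly_at_extrema show ?thesis
    by (intro Qpoly_roots_card_4[of r' "\<psi> xM" "\<psi> xm" r]) auto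
qed

text \<open>\<open>Q \<ge> 0\<close> on the range \<open>[\<psi> xm, \<psi> xM]\<close>, but \<open>Q < 0\<close> on \<open>(u4, u3)\<close> and \<open>(u2, u1)\<close>.\<close>
lemma min_eq_third_root:
  assumes "quartic_roots u1 u2 u3 u4 b c d"
  shows "\<psi> xm = u3"
proof -
  interpret quartic_roots u1 u2 u3 u4 b c d by (fact assms)
  have "\<psi> xm \<in> {u1, u2, u3, u4}" "\<psi> xM \<in> {u1, u2, u3, u4}"
    using Qpoly_at_extrema roots by blast+
  moreover have False if "\<psi> xm = u4 \<or> \<psi> xm = u2"
  proof -
    have "\<psi> xm = u4 \<and> u3 \<le> \<psi> xM \<or> \<psi> xm = u2 \<and> u1 \<le> \<psi> xM"
      using that calculation(2) nonconstant u43 u32 u21 by auto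
    then have "0 \<le> Qpoly b c d ((\<psi> xm + (if \<psi> xm = u4 then u3 else u1)) / 2)"
      using u43 u32 u21 by (intro Qpoly_nonneg_between) auto
    moreover have "Qpoly b c d ((\<psi> xm + (if \<psi> xm = u4 then u3 else u1)) / 2) < 0"
      using that u43 u32 u21 by (intro Qpoly_neg_between_roots) auto
    ultimately show False by simp
  qed
  ultimately show ?thesis
    using nonconstant u43 u32 u21 by auto
qed

end

context quartic_roots
begin

lemma bpn_solution_eq_wave_shift:
  assumes "bpn_solution b c d \<psi>"
  shows "\<exists>x0. \<forall>x. \<psi> x = wave (x + x0)"
proof -
  obtain \<psi>1 xm xM where "bounded_orbit b c d \<psi> \<psi>1 xm xM"
    using bpn_solution_imp_bounded_orbit[OF assms] .
  then interpret orbit: bounded_orbit b c d \<psi> \<psi>1 xm xM .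
  obtain w1 where w: "\<And>x. (wave has_real_derivative w1 x) (at x)"
      "\<And>x. (w1 has_real_derivative ode_rhs b c (wave x)) (at x)"
    using wave_is_solution unfolding is_solution_iff by blast
  have "w1 0 = 0"
    using DERIV_local_min[OF w(1) zero_less_one] wave_between wave_0 by auto
  define B where "B = \<bar>\<psi> xm\<bar> + \<bar>\<psi> xM\<bar> + \<bar>u3\<bar> + \<bar>u2\<bar>"
  have "\<psi> x = wave (x - xm)" for x
  proof (rule second_order_autonomous_unique[OF orbit.deriv orbit.deriv1])
    show "((\<lambda>x. wave (x - xm)) has_real_derivative w1 (x - xm)) (at x)" for x
      using DERIV_shift[of wave "w1 (x - xm)" x "- xm"] w(1)[of "x - xm"] by simp
    show "((\<lambda>x. w1 (x - xm)) has_real_derivative ode_rhs b c (wave (x - xm))) (at x)" for x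
      using DERIV_shift[of w1 "ode_rhs b c (wave (x - xm))" x "- xm"] w(2)[of "x - xm"] by simp
    show "\<bar>ode_rhs b c (\<psi> x) - ode_rhs b c (wave (x - xm))\<bar> \<le> (6 * B\<^sup>2 + \<bar>c\<bar>) * \<bar>\<psi> x - wave (x - xm)\<bar>"
      for x
      using orbit.abs_bounded[of x] wave_between[of "x - xm"]
      by (intro ode_rhs_lipschitz) (auto simp: B_def)
    show "\<psi> xm = wave (xm - xm)"
      using orbit.min_eq_third_root quartic_roots_axioms wave_0 by simp
    show "\<psi>1 xm = w1 (xm - xm)"
      using orbit.deriv_at_extrema(1) \<open>w1 0 = 0\<close> by simp
  qed
  then show ?thesis by (metis diff_conv_add_uminus)
qed

end

lemma ex_bpn_solution_iff_card_roots:
  "(\<exists>\<phi>. bpn_solution b c d \<phi>) \<longleftrightarrow> card {p. Qpoly b c d p = 0} = 4"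
proof
  assume "\<exists>\<phi>. bpn_solution b c d \<phi>"
  then show "card {p. Qpoly b c d p = 0} = 4"
    by (metis bpn_solution_imp_bounded_orbit bounded_orbit.Qpoly_card_roots)
next
  assume "card {p. Qpoly b c d p = 0} = 4"
  then obtain v4 v3 v2 v1 where "v4 < v3" "v3 < v2" "v2 < v1"
      "{p. Qpoly b c d p = 0} = {v4, v3, v2, v1}"
    by (rule card_4_sorted)
  then have "quartic_roots v1 v2 v3 v4 b c d"
    by unfold_locales auto
  then show "\<exists>\<phi>. bpn_solution b c d \<phi>"
    using quartic_roots.wave_bpn_solution by blast
qed

section \<open>The parameter region\<close>

lemma b_crit_six_sq: "s > 0 \<Longrightarrow> b_crit (6 * s\<^sup>2) = 4 * s ^ 3"
proof -
  assume "s > 0"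
  have "2 * (6 * s\<^sup>2) ^ 3 = (4 * s ^ 3 * sqrt 27)\<^sup>2"
    by (simp add: power_mult_distrib power2_eq_square power3_eq_cube)
  with \<open>s > 0\<close> show ?thesis unfolding b_crit_def by simp
qed

text \<open>Rolle's theorem twice: between the four roots of \<open>Q\<close> lie three roots of \<open>Q'\<close>, and between
  those two roots \<open>\<plusminus>s\<close> of \<open>Q''\<close>, so \<open>c = 6s\<^sup>2\<close>, and \<open>Q'\<close> changes sign at \<open>\<plusminus>s\<close>.\<close>
lemma Omega_if_card_roots:
  assumes "card {p. Qpoly b c d p = 0} = 4"
  shows "(b, c) \<in> Omega"
proof -
  obtain v4 v3 v2 v1 where v: "v4 < v3" "v3 < v2" "v2 < v1" and
    roots: "{p. Qpoly b c d p = 0} = {v4, v3, v2, v1}"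
    using card_4_sorted[OF assms] by blast
  have crit: "\<exists>w. v < w \<and> w < v' \<and> ode_rhs b c w = 0"
    if "v < v'" "v \<in> {v4, v3, v2, v1}" "v' \<in> {v4, v3, v2, v1}" for v v'
  proof -
    have "Qpoly b c d v = 0" "Qpoly b c d v' = 0"
      using that(2,3) unfolding roots[symmetric] by auto
    then show ?thesis
      using Rolle_real_deriv[OF that(1) _ Qpoly_has_real_derivative[of b c d]] by simp
  qed
  obtain w1 w2 w3 where w: "v4 < w1" "w1 < v3" "v3 < w2" "w2 < v2" "v2 < w3"
      and w_roots: "ode_rhs b c w1 = 0" "ode_rhs b c w2 = 0" "ode_rhs b c w3 = 0"
    using crit[OF v(1)] crit[OF v(2)] crit[OF v(3)] by auto
  obtain t where t: "w1 < t" "t < w2" "6 * t\<^sup>2 - c = 0"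
    using Rolle_real_deriv[OF _ _ ode_rhs_has_real_derivative[of b c], of w1 w2] w w_roots by auto
  obtain s where s: "w2 < s" "s < w3" "6 * s\<^sup>2 - c = 0"
    using Rolle_real_deriv[OF _ _ ode_rhs_has_real_derivative[of b c], of w2 w3] w w_roots by auto
  have "t\<^sup>2 = s\<^sup>2" using t s by simp
  then have "t = - s" using t s by (auto simp: power2_eq_iff)
  then have "s > 0" using t s by simp
  have c: "c = 6 * s\<^sup>2" using s by simp
  have rhs: "ode_rhs b c x = 2 * (x - w1) * (x - w2) * (x - w3)" for x
    using w w_roots by (intro ode_rhs_eq_prod_roots) auto
  have "0 < 2 * (- s - w1) * (- s - w2) * (- s - w3)"
    using t s \<open>t = - s\<close> by (intro mult_neg_neg[OF mult_pos_neg[OF mult_pos_pos]]) auto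
  moreover have "2 * (s - w1) * (s - w2) * (s - w3) < 0"
    using t s by (intro mult_pos_neg[OF mult_pos_pos[OF mult_pos_pos]]) auto
  ultimately have "- (4 * s ^ 3) < b" "b < 4 * s ^ 3"
    using rhs[of "- s"] rhs[of s] unfolding ode_rhs_def c
    by (simp_all add: power2_eq_square power3_eq_cube algebra_simps)
  then show ?thesis
    unfolding Omega_def c using b_crit_six_sq[OF \<open>s > 0\<close>] \<open>s > 0\<close> by simp
qed

lemma ode_rhs_three_roots:
  assumes "(b, c) \<in> Omega"
  obtains w1 w2 w3 where "w1 < w2" "w2 < w3"
    "ode_rhs b c w1 = 0" "ode_rhs b c w2 = 0" "ode_rhs b c w3 = 0"
proof -
  define s where "s = sqrt (c / 6)"
  have "c > 0" and b: "- b_crit c < b" "b < b_crit c" using assms unfolding Omega_def by auto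
  then have "s > 0" and c: "c = 6 * s\<^sup>2" by (simp_all add: s_def)
  have cont: "continuous_on S (ode_rhs b c)" for S
    unfolding ode_rhs_def[abs_def] by (intro continuous_intros)
  have "b_crit c = 4 * s ^ 3"
    using b_crit_six_sq[OF \<open>s > 0\<close>] c by simp
  then have neg: "ode_rhs b c s < 0" and pos: "0 < ode_rhs b c (- s)"
    using b unfolding ode_rhs_def c by (simp_all add: power2_eq_square power3_eq_cube)
  obtain w1 where w1: "w1 < - s" "ode_rhs b c w1 = 0"
  proof -
    have "continuous_on UNIV (\<lambda>p. - ode_rhs b c p)"
      using cont by (intro continuous_intros)
    moreover have "filterlim (\<lambda>p. - ode_rhs b c p) at_top at_bot"
      unfolding ode_rhs_def by real_asymp
    ultimately obtain r where "r < - s" "- ode_rhs b c r = 0"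
      using continuous_root_below[of "\<lambda>p. - ode_rhs b c p" "- s"] pos by auto
    with that show ?thesis by simp
  qed
  obtain w2 where w2: "- s < w2" "w2 < s" "ode_rhs b c w2 = 0"
    by (rule continuous_root_between[where a="- s" and b=s, OF cont])
      (use neg pos \<open>s > 0\<close> in \<open>auto simp: mult_pos_neg\<close>)
  have "filterlim (ode_rhs b c) at_top at_top"
    unfolding ode_rhs_def[abs_def] by real_asymp
  then obtain w3 where w3: "s < w3" "ode_rhs b c w3 = 0"
    using continuous_root_above[OF cont _ neg] by blast
  show ?thesis
    by (rule that[of w1 w2 w3]) (use w1 w2 w3 in auto)
qed

text \<open>Between three critical points \<open>w1 < w2 < w3\<close> of \<open>Q\<close> it increases and then decreases, so a
  suitable \<open>d\<close> makes \<open>Q\<close> negative at the local minima \<open>w1, w3\<close> and positive at the local maximum.\<close>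
lemma Qpoly_alternating_at_critical_points:
  assumes w: "w1 < w2" "w2 < w3"
    and w_roots: "ode_rhs b c w1 = 0" "ode_rhs b c w2 = 0" "ode_rhs b c w3 = 0"
  obtains d where "Qpoly b c d w1 < 0" "0 < Qpoly b c d w2" "Qpoly b c d w3 < 0"
proof -
  have rhs: "ode_rhs b c x = 2 * (x - w1) * (x - w2) * (x - w3)" for x
    using w w_roots by (intro ode_rhs_eq_prod_roots) auto
  have "Qpoly b c 0 w1 < Qpoly b c 0 w2"
  proof (rule DERIV_pos_imp_increasing_open[OF w(1) _ continuous_on_Qpoly])
    fix x assume "w1 < x" "x < w2"
    then have "0 < ode_rhs b c x"
      unfolding rhs using w by (intro mult_neg_neg[OF mult_pos_neg]) auto
    then have "0 < 2 * ode_rhs b c x" by simp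
    then show "\<exists>y. (Qpoly b c 0 has_real_derivative y) (at x) \<and> 0 < y"
      using Qpoly_has_real_derivative by blast
  qed
  moreover have "Qpoly b c 0 w3 < Qpoly b c 0 w2"
  proof (rule DERIV_neg_imp_decreasing_open[OF w(2) _ continuous_on_Qpoly])
    fix x assume "w2 < x" "x < w3"
    then have "ode_rhs b c x < 0"
      unfolding rhs using w by (intro mult_pos_neg[OF mult_pos_pos]) auto
    then have "2 * ode_rhs b c x < 0" by simp
    then show "\<exists>y. (Qpoly b c 0 has_real_derivative y) (at x) \<and> y < 0"
      using Qpoly_has_real_derivative by blast
  qed
  moreover define m where "m = max (Qpoly b c 0 w1) (Qpoly b c 0 w3)"
  ultimately have m: "Qpoly b c 0 w1 \<le> m" "Qpoly b c 0 w3 \<le> m" "m < Qpoly b c 0 w2"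
    by auto
  define d where "d = - (Qpoly b c 0 w2 + m) / 4"
  have Qd: "2 * Qpoly b c d p = 2 * Qpoly b c 0 p - (Qpoly b c 0 w2 + m)" for p
  proof -
    have "Qpoly b c d p = Qpoly b c 0 p + 2 * d" by (simp add: Qpoly_def)
    then show ?thesis by (simp add: d_def field_simps)
  qed
  have "Qpoly b c d w1 < 0" "0 < Qpoly b c d w2" "Qpoly b c d w3 < 0"
    using m Qd[of w1] Qd[of w2] Qd[of w3] by linarith+
  then show ?thesis by (rule that)
qed

lemma card_roots_if_Omega:
  assumes "(b, c) \<in> Omega"
  shows "\<exists>d. card {p. Qpoly b c d p = 0} = 4"
proof -
  obtain w1 w2 w3 where w: "w1 < w2" "w2 < w3"
    and "ode_rhs b c w1 = 0" "ode_rhs b c w2 = 0" "ode_rhs b c w3 = 0"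
    using ode_rhs_three_roots[OF assms] by blast
  then obtain d where q: "Qpoly b c d w1 < 0" "0 < Qpoly b c d w2" "Qpoly b c d w3 < 0"
    by (rule Qpoly_alternating_at_critical_points)
  obtain r1 where "r1 < w1" "Qpoly b c d r1 = 0"
    using Qpoly_root_below[OF q(1)] by blast
  moreover obtain r2 where "w1 < r2" "r2 < w2" "Qpoly b c d r2 = 0"
    by (rule continuous_root_between[where a=w1 and b=w2, OF continuous_on_Qpoly])
      (use q w in \<open>auto simp: mult_neg_pos\<close>)
  moreover obtain r3 where "w2 < r3" "r3 < w3" "Qpoly b c d r3 = 0"
    by (rule continuous_root_between[where a=w2 and b=w3, OF continuous_on_Qpoly])
      (use q w in \<open>auto simp: mult_pos_neg\<close>)
  moreover obtain r4 where "w3 < r4" "Qpoly b c d r4 = 0"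
    using Qpoly_root_above[OF q(3)] by blast
  ultimately have "card {p. Qpoly b c d p = 0} = 4"
    by (intro Qpoly_roots_card_4[of r4 r3 r2 r1]) auto
  then show ?thesis ..
qed

lemma ex_card_roots_iff_Omega: "(\<exists>d. card {p. Qpoly b c d p = 0} = 4) \<longleftrightarrow> (b, c) \<in> Omega"
  using Omega_if_card_roots card_roots_if_Omega by blast

theorem lemma1:
  fixes b c d :: real
  shows "((\<exists>\<phi>. bpn_solution b c d \<phi>) \<longleftrightarrow> card {p. Qpoly b c d p = 0} = 4)
    \<and> ((\<exists>d'. card {p. Qpoly b c d' p = 0} = 4) \<longleftrightarrow> (b, c) \<in> Omega)
    \<and> (\<forall>u1 u2 u3 u4. u4 < u3 \<and> u3 < u2 \<and> u2 < u1 \<and>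
          {p. Qpoly b c d p = 0} = {u1, u2, u3, u4} \<longrightarrow>
        (let \<nu> = sqrt ((u1 - u3) * (u2 - u4)) / 2;
             k = sqrt (((u1 - u4) * (u2 - u3)) / ((u1 - u3) * (u2 - u4)));
             \<phi> = (\<lambda>x. u4 + ((u2 - u4) * (u3 - u4)) /
                        ((u2 - u4) - (u2 - u3) * (jacobi_sn (\<nu> * x) k)\<^sup>2))
         in is_solution b c d \<phi>
            \<and> bpn_solution b c d \<phi>
            \<and> fundamental_period \<phi> (2 * ellip_K k / \<nu>)
            \<and> \<phi> 0 = u3 \<and> \<phi> (ellip_K k / \<nu>) = u2 \<and> \<phi> (- ellip_K k / \<nu>) = u2
            \<and> (\<forall>x\<in>{- ellip_K k / \<nu> .. ellip_K k / \<nu>}. u3 \<le> \<phi> x \<and> \<phi> x \<le> u2)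
            \<and> (\<forall>\<psi>. bpn_solution b c d \<psi> \<longrightarrow> (\<exists>x0. \<forall>x. \<psi> x = \<phi> (x + x0)))))"
  apply (intro conjI allI impI)
    apply (rule ex_bpn_solution_iff_card_roots)
   apply (rule ex_card_roots_iff_Omega)
  subgoal premises roots for u1 u2 u3 u4
  proof -
    interpret quartic_roots u1 u2 u3 u4 b c d
      using roots by unfold_locales auto
    show ?thesis
      unfolding Let_def wave_freq_def[symmetric] wave_modulus_def[symmetric] wave_def[symmetric]
      using wave_is_solution wave_bpn_solution wave_fundamental_period wave_0 wave_ellip_K
        wave_between bpn_solution_eq_wave_shift by blast
  qed
  done

end
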